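(* Let $D$ be a tournament missing disjoint paths of length 2 and let $C=a_1b_1c_1,\dots,a_kb_kc_k$ be a double cycle in $\Delta(D)$. Then for all $i\in\{1,\dots,k\}$, with $H=D[K(C)]$: (1) $N^+_H(a_i)\setminus\{c_i\}=N^+_H(c_i)\setminus\{a_i\}$; (2) $N^-_H(a_i)\setminus\{c_i\}=N^-_H(c_i)\setminus\{a_i\}$.
   Context: All digraphs are finite oriented graphs; $D[X]$ is the induced subdigraph. $N^+_H(v)$, $N^-_H(v)$ are out/in-neighborhoods in $H$; $N^{++}(v)$ (in $D$) is the set of vertices $w\notin N^+(v)\cup\{v\}$ with $u\to w$ for some $u\in N^+(v)$. A missing edge is a pair of distinct non-adjacent vertices; the missing graph is formed by the missing edges. $D$ is a tournament missing disjoint paths of length 2 if its missing graph is a vertex-disjoint union of paths each with exactly two edges. For missing edges $\{x,y\},\{a,b\}$, $\{x,y\}$ loses to $\{a,b\}$ (written $xy\to ab$) if the endpoints can be labelled so that $x\to a$, $b\notin N^+(x)\cup N^{++}(x)$, $y\to b$, $a\notin N^+(y)\cup N^{++}(y)$. $\Delta(D)$ has the missing edges as vertices and arcs $(e,e')$ whenever $e$ loses to $e'$. For missing paths $abc$, $xyz$, $abc\to xyz$ means each of $ab,bc$ loses to each of $xy,yz$. A double cycle is a sequence $C=a_1b_1c_1,\dots,a_kb_kc_k$ ($k\ge2$) of distinct missing paths of length 2 (components of the missing graph, edges $a_ib_i,b_ic_i$) with $a_ib_ic_i\to a_{i+1}b_{i+1}c_{i+1}$ for all $i$, indices modulo $k$.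 $K(C)=\{a_i,b_i,c_i:1\le i\le k\}$. *)

theory Defs
  imports Main
begin

definition oriented_graph :: "'a set \<Rightarrow> ('a \<times> 'a) set \<Rightarrow> bool" where
  "oriented_graph V E \<longleftrightarrow> finite V \<and> E \<subseteq> V \<times> V \<and> (\<forall>x. (x,x) \<notin> E)
     \<and> (\<forall>x y. (x,y) \<in> E \<longrightarrow> (y,x) \<notin> E)"

definition missing_edge :: "'a set \<Rightarrow> ('a \<times> 'a) set \<Rightarrow> 'a \<Rightarrow> 'a \<Rightarrow> bool" where
  "missing_edge V E x y \<longleftrightarrow> x \<in> V \<and> y \<in> V \<and> x \<noteq> y \<and> (x,y) \<notin> E \<and> (y,x) \<notin> E"

text \<open>The missing graph is a vertex-disjoint union of paths with exactly two edges
  (each triple (a,b,c) encodes the path with edges ab, bc).\<close>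
definition tournament_missing_disjoint_P2 :: "'a set \<Rightarrow> ('a \<times> 'a) set \<Rightarrow> bool" where
  "tournament_missing_disjoint_P2 V E \<longleftrightarrow> oriented_graph V E \<and>
     (\<exists>P :: ('a \<times> 'a \<times> 'a) set.
        (\<forall>(a,b,c)\<in>P. a \<in> V \<and> b \<in> V \<and> c \<in> V \<and> a \<noteq> b \<and> b \<noteq> c \<and> a \<noteq> c) \<and>
        (\<forall>(a,b,c)\<in>P. \<forall>(x,y,z)\<in>P. (a,b,c) \<noteq> (x,y,z) \<longrightarrow> {a,b,c} \<inter> {x,y,z} = {}) \<and>
        (\<forall>x y. missing_edge V E x y \<longleftrightarrow>
           (\<exists>(a,b,c)\<in>P. {x,y} = {a,b} \<or> {x,y} = {b,c})))"

text \<open>abc is a missing path of length 2 which is a component of the missing graph.\<close>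
definition missing_path :: "'a set \<Rightarrow> ('a \<times> 'a) set \<Rightarrow> 'a \<Rightarrow> 'a \<Rightarrow> 'a \<Rightarrow> bool" where
  "missing_path V E a b c \<longleftrightarrow> missing_edge V E a b \<and> missing_edge V E b c \<and> a \<noteq> c \<and>
     (\<forall>x y. missing_edge V E x y \<and> {x,y} \<inter> {a,b,c} \<noteq> {} \<longrightarrow> {x,y} = {a,b} \<or> {x,y} = {b,c})"

definition out_nbhd :: "'a set \<Rightarrow> ('a \<times> 'a) set \<Rightarrow> 'a \<Rightarrow> 'a set" where
  "out_nbhd S E v = {w \<in> S. (v,w) \<in> E}"

definition in_nbhd :: "'a set \<Rightarrow> ('a \<times> 'a) set \<Rightarrow> 'a \<Rightarrow> 'a set" where
  "in_nbhd S E v = {w \<in> S. (w,v) \<in> E}"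

definition second_out_nbhd :: "'a set \<Rightarrow> ('a \<times> 'a) set \<Rightarrow> 'a \<Rightarrow> 'a set" where
  "second_out_nbhd V E v = {w \<in> V. w \<notin> out_nbhd V E v \<and> w \<noteq> v \<and>
      (\<exists>u \<in> out_nbhd V E v. (u,w) \<in> E)}"

definition loses :: "'a set \<Rightarrow> ('a \<times> 'a) set \<Rightarrow> 'a \<Rightarrow> 'a \<Rightarrow> 'a \<Rightarrow> 'a \<Rightarrow> bool" where
  "loses V E x y a b \<longleftrightarrow> (\<exists>x' y' a' b'. {x',y'} = {x,y} \<and> {a',b'} = {a,b} \<and>
     (x',a') \<in> E \<and> b' \<notin> out_nbhd V E x' \<union> second_out_nbhd V E x' \<and>
     (y',b') \<in> E \<and> a' \<notin> out_nbhd V E y' \<union> second_out_nbhd V E y')"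

definition path_loses :: "'a set \<Rightarrow> ('a \<times> 'a) set \<Rightarrow> 'a \<Rightarrow> 'a \<Rightarrow> 'a \<Rightarrow> 'a \<Rightarrow> 'a \<Rightarrow> 'a \<Rightarrow> bool" where
  "path_loses V E a b c x y z \<longleftrightarrow>
     loses V E a b x y \<and> loses V E a b y z \<and> loses V E b c x y \<and> loses V E b c y z"

definition double_cycle :: "'a set \<Rightarrow> ('a \<times> 'a) set \<Rightarrow> nat \<Rightarrow> (nat \<Rightarrow> 'a) \<Rightarrow> (nat \<Rightarrow> 'a) \<Rightarrow> (nat \<Rightarrow> 'a) \<Rightarrow> bool" where
  "double_cycle V E k a b c \<longleftrightarrow> k \<ge> 2 \<and>
     (\<forall>i<k. missing_path V E (a i) (b i) (c i)) \<and>
     (\<forall>i<k. \<forall>j<k. i \<noteq> j \<longrightarrow> {a i, b i, c i} \<noteq> {a j, b j, c j}) \<and>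
     (\<forall>i<k. path_loses V E (a i) (b i) (c i)
                (a (Suc i mod k)) (b (Suc i mod k)) (c (Suc i mod k)))"

definition cycle_vertices :: "nat \<Rightarrow> (nat \<Rightarrow> 'a) \<Rightarrow> (nat \<Rightarrow> 'a) \<Rightarrow> (nat \<Rightarrow> 'a) \<Rightarrow> 'a set" where
  "cycle_vertices k a b c = (\<Union>i<k. {a i, b i, c i})"

end

theory Submission
  imports Defs
begin

text \<open>Split every missing path \<open>a\<^sub>j b\<^sub>j c\<^sub>j\<close> into its middle \<open>{b\<^sub>j}\<close> and its ends
  \<open>{a\<^sub>j, c\<^sub>j}\<close>. Because every edge of one path loses to every edge of the next one, the arcs
  between consecutive paths are forced: each part of path \<open>j+1\<close> dominates a part of path \<open>j\<close>
  (which one depends only on the arc between the middles), and no 2-path leaves path \<open>j\<close> and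
  returns to a vertex of path \<open>j+1\<close> dominating its start. Walking forward around the cycle from
  the ends of path \<open>i\<close> therefore yields in every other path a part dominating both \<open>a\<^sub>i\<close> and
  \<open>c\<^sub>i\<close>; walking backward yields a part dominated by both. By asymmetry these two parts
  differ, so they cover the path, and every vertex outside path \<open>i\<close> is joined to \<open>a\<^sub>i\<close> and
  \<open>c\<^sub>i\<close> in the same direction, while \<open>b\<^sub>i\<close> is adjacent to neither.\<close>

lemma loses_no_return_path:
  assumes og: "oriented_graph V E" and l: "loses V E x y p q"
    and s: "s \<in> {x,y}" and t: "t \<in> {p,q}" and ts: "(t,s) \<in> E" and su: "(s,u) \<in> E"
  shows "(u,t) \<notin> E"
proof
  assume ut: "(u,t) \<in> E"
  from l obtain x' y' p' q' where h: "{x',y'} = {x,y}" "{p',q'} = {p,q}" "(x',p') \<in> E"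
    "q' \<notin> out_nbhd V E x' \<union> second_out_nbhd V E x'" "(y',q') \<in> E"
    "p' \<notin> out_nbhd V E y' \<union> second_out_nbhd V E y'" unfolding loses_def by blast
  have "t \<in> out_nbhd V E s \<union> second_out_nbhd V E s"
    using og ts su ut unfolding second_out_nbhd_def out_nbhd_def oriented_graph_def by blast
  moreover have "s = x' \<or> s = y'" using s h(1) by (auto simp: doubleton_eq_iff)
  moreover have "t = p' \<or> t = q'" using t h(2) by (auto simp: doubleton_eq_iff)
  moreover have "(t,s) \<in> E \<Longrightarrow> (s,t) \<notin> E" using og unfolding oriented_graph_def by blast
  ultimately show False using h ts by blast
qed

lemma loses_orientation:
  assumes og: "oriented_graph V E" and l: "loses V E x y p q"
    and adj: "\<forall>u\<in>{x,y}. \<forall>w\<in>{p,q}. (u,w) \<in> E \<or> (w,u) \<in> E"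
  shows "((x,p) \<in> E \<longleftrightarrow> (y,q) \<in> E) \<and> ((x,p) \<in> E \<longleftrightarrow> (q,x) \<in> E) \<and> ((x,p) \<in> E \<longleftrightarrow> (p,y) \<in> E)"
proof -
  from l obtain x' y' p' q' where h: "{x',y'} = {x,y}" "{p',q'} = {p,q}" "(x',p') \<in> E"
    "q' \<notin> out_nbhd V E x' \<union> second_out_nbhd V E x'" "(y',q') \<in> E"
    "p' \<notin> out_nbhd V E y' \<union> second_out_nbhd V E y'" unfolding loses_def by blast
  have in_V: "\<And>x y. (x,y) \<in> E \<Longrightarrow> x \<in> V \<and> y \<in> V"
    and asym: "\<And>x y. (x,y) \<in> E \<Longrightarrow> (y,x) \<notin> E" using og unfolding oriented_graph_def by blast+
  have "(x',q') \<notin> E" using h(4) in_V[OF h(5)] unfolding out_nbhd_def by blast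
  moreover have "(y',p') \<notin> E" using h(6) in_V[OF h(3)] unfolding out_nbhd_def by blast
  moreover have "(x' = x \<and> y' = y) \<or> (x' = y \<and> y' = x)" using h(1) by (auto simp: doubleton_eq_iff)
  moreover have "(p' = p \<and> q' = q) \<or> (p' = q \<and> q' = p)" using h(2) by (auto simp: doubleton_eq_iff)
  ultimately show ?thesis using adj h(3) h(5) asym by (elim disjE conjE) (simp; metis)+
qed

lemma path_loses_no_return_path:
  assumes "oriented_graph V E" and "path_loses V E a b c x y z"
    and "u \<in> {a,b,c}" and "w \<in> {x,y,z}" and "(w,u) \<in> E" and "(u,v) \<in> E"
  shows "(v,w) \<notin> E"
proof -
  obtain p q r s where "loses V E p q r s" "u \<in> {p,q}" "w \<in> {r,s}"
  proof -
    have "u \<in> {a,b} \<or> u \<in> {b,c}" and "w \<in> {x,y} \<or> w \<in> {y,z}" using assms(3,4) by blast+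
    then show ?thesis using that assms(2) unfolding path_loses_def by blast
  qed
  then show ?thesis using loses_no_return_path assms(1,5,6) by metis
qed

lemma path_loses_orientation:
  assumes og: "oriented_graph V E" and pl: "path_loses V E a b c x y z"
    and adj: "\<forall>u\<in>{a,b,c}. \<forall>w\<in>{x,y,z}. (u,w) \<in> E \<or> (w,u) \<in> E"
  shows "if (b,y) \<in> E then {y} \<times> {a,c} \<union> {x,z} \<times> {b} \<subseteq> E
         else {y} \<times> {b} \<union> {x,z} \<times> {a,c} \<subseteq> E"
proof -
  have l: "loses V E a b x y" "loses V E a b y z" "loses V E b c x y" "loses V E b c y z"
    using pl unfolding path_loses_def by auto
  have o1: "((a,x) \<in> E \<longleftrightarrow> (b,y) \<in> E) \<and> ((a,x) \<in> E \<longleftrightarrow> (y,a) \<in> E) \<and> ((a,x) \<in> E \<longleftrightarrow> (x,b) \<in> E)"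
    by (rule loses_orientation[OF og l(1)]) (use adj in blast)
  have o2: "((a,y) \<in> E \<longleftrightarrow> (b,z) \<in> E) \<and> ((a,y) \<in> E \<longleftrightarrow> (z,a) \<in> E) \<and> ((a,y) \<in> E \<longleftrightarrow> (y,b) \<in> E)"
    by (rule loses_orientation[OF og l(2)]) (use adj in blast)
  have o3: "((b,x) \<in> E \<longleftrightarrow> (c,y) \<in> E) \<and> ((b,x) \<in> E \<longleftrightarrow> (y,b) \<in> E) \<and> ((b,x) \<in> E \<longleftrightarrow> (x,c) \<in> E)"
    by (rule loses_orientation[OF og l(3)]) (use adj in blast)
  have o4: "((b,y) \<in> E \<longleftrightarrow> (c,z) \<in> E) \<and> ((b,y) \<in> E \<longleftrightarrow> (z,b) \<in> E) \<and> ((b,y) \<in> E \<longleftrightarrow> (y,c) \<in> E)"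
    by (rule loses_orientation[OF og l(4)]) (use adj in blast)
  show ?thesis
  proof (cases "(b,y) \<in> E")
    case True
    then have "(y,a) \<in> E" "(x,b) \<in> E" "(z,b) \<in> E" "(y,c) \<in> E" using o1 o4 by blast+
    then show ?thesis using True by simp
  next
    case False
    then have "(y,b) \<in> E" "(x,a) \<in> E" "(z,c) \<in> E" using adj o1 o4 by blast+
    moreover from this have "(z,a) \<in> E" "(x,c) \<in> E" using o2 o3 by blast+
    ultimately show ?thesis using False by simp
  qed
qed

lemma Suc_mod_neq: "1 < k \<Longrightarrow> j < k \<Longrightarrow> Suc j mod k \<noteq> (j::nat)"
  by (cases "Suc j = k") auto

lemma add_mod_neq: "i < k \<Longrightarrow> 0 < t \<Longrightarrow> t < k \<Longrightarrow> (i + t) mod k \<noteq> (i::nat)"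
  by (cases "i + t < k") (auto simp: le_mod_geq)

lemma add_mod_surj:
  fixes i j k :: nat
  assumes "i < k" "j < k" "j \<noteq> i"
  obtains t where "0 < t" "t < k" "(i + t) mod k = j"
proof (cases "i < j")
  case True
  then show ?thesis using that[of "j - i"] assms by simp
next
  case False
  then have "(i + (j + k - i)) mod k = j" using assms by simp
  then show ?thesis using that[of "j + k - i"] assms False by simp
qed

locale double_cycle_digraph =
  fixes V :: "'a set" and E :: "('a \<times> 'a) set" and k :: nat and a b c :: "nat \<Rightarrow> 'a"
  assumes oriented: "oriented_graph V E" and double_cycle: "double_cycle V E k a b c"
begin

definition triple :: "nat \<Rightarrow> 'a set" where
  "triple j = {a j, b j, c j}"

definition part :: "nat \<Rightarrow> bool \<Rightarrow> 'a set" where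
  "part j mid = (if mid then {b j} else {a j, c j})"

definition middles_forward :: "nat \<Rightarrow> bool" where
  "middles_forward j \<longleftrightarrow> (b j, b (Suc j mod k)) \<in> E"

lemma arc_asym: "(x,y) \<in> E \<Longrightarrow> (y,x) \<notin> E"
  and no_loop: "(x,x) \<notin> E"
  using oriented unfolding oriented_graph_def by blast+

lemma two_le_k: "2 \<le> k"
  using double_cycle unfolding double_cycle_def by blast

lemma missing_path_at: "j < k \<Longrightarrow> missing_path V E (a j) (b j) (c j)"
  using double_cycle unfolding double_cycle_def by blast

lemma path_loses_next:
  "j < k \<Longrightarrow> path_loses V E (a j) (b j) (c j) (a (Suc j mod k)) (b (Suc j mod k)) (c (Suc j mod k))"
  using double_cycle unfolding double_cycle_def by blast

lemma Suc_mod_less: "Suc j mod k < k"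
  using two_le_k by simp

lemma triple_meets_imp_subset:
  assumes j: "j < k" and l: "l < k" and meet: "triple j \<inter> triple l \<noteq> {}"
  shows "triple j \<subseteq> triple l"
proof -
  have edges: "missing_edge V E (a j) (b j)" "missing_edge V E (b j) (c j)"
    using missing_path_at[OF j] unfolding missing_path_def by auto
  have closed: "\<And>x y. missing_edge V E x y \<Longrightarrow> {x,y} \<inter> triple l \<noteq> {} \<Longrightarrow> {x,y} \<subseteq> triple l"
    using missing_path_at[OF l] unfolding missing_path_def triple_def by blast
  have "b j \<in> triple l"
    using meet closed[OF edges(1)] closed[OF edges(2)] unfolding triple_def by blast
  then show ?thesis using closed[OF edges(1)] closed[OF edges(2)] unfolding triple_def by blast
qed

lemma triples_disjoint: "j < k \<Longrightarrow> l < k \<Longrightarrow> j \<noteq> l \<Longrightarrow> triple j \<inter> triple l = {}"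
  using triple_meets_imp_subset[of j l] triple_meets_imp_subset[of l j] double_cycle
  unfolding double_cycle_def triple_def by blast

lemma triple_subset_V: "j < k \<Longrightarrow> triple j \<subseteq> V"
  using missing_path_at[of j] unfolding missing_path_def missing_edge_def triple_def by blast

text \<open>Missing edges stay inside a missing path, so distinct paths are completely joined.\<close>
lemma arc_between_triples:
  assumes j: "j < k" and l: "l < k" and jl: "j \<noteq> l" and u: "u \<in> triple j" and w: "w \<in> triple l"
  shows "(u,w) \<in> E \<or> (w,u) \<in> E"
proof -
  have "\<not> missing_edge V E u w"
  proof
    assume "missing_edge V E u w"
    then have "{u,w} = {a j, b j} \<or> {u,w} = {b j, c j}"
      using missing_path_at[OF j] u unfolding missing_path_def triple_def by blast
    then show False using triples_disjoint[OF j l jl] w unfolding triple_def by blast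
  qed
  moreover have "u \<noteq> w" using triples_disjoint[OF j l jl] u w by blast
  ultimately show ?thesis
    using triple_subset_V[OF j] triple_subset_V[OF l] u w unfolding missing_edge_def by blast
qed

lemma part_subset_triple: "part j mid \<subseteq> triple j"
  unfolding part_def triple_def by auto

lemma part_nonempty: "\<exists>u. u \<in> part j mid"
  unfolding part_def by auto

lemma triple_eq_parts: "triple j = part j False \<union> part j True"
  unfolding part_def triple_def by auto

lemma next_part_dominates:
  assumes j: "j < k"
  shows "part (Suc j mod k) (mid \<noteq> middles_forward j) \<times> part j mid \<subseteq> E"
proof -
  have "j \<noteq> Suc j mod k" using Suc_mod_neq[of k j] two_le_k j by simp
  then have "\<forall>u\<in>triple j. \<forall>w\<in>triple (Suc j mod k). (u,w) \<in> E \<or> (w,u) \<in> E"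
    using arc_between_triples[OF j Suc_mod_less] by blast
  from path_loses_orientation[OF oriented path_loses_next[OF j] this[unfolded triple_def]]
  show ?thesis unfolding part_def middles_forward_def by (cases mid) (auto split: if_splits)
qed

lemma no_return_path:
  assumes "j < k" and "u \<in> triple j" and "w \<in> triple (Suc j mod k)" and "(w,u) \<in> E" and "(u,v) \<in> E"
  shows "(v,w) \<notin> E"
  using path_loses_no_return_path[OF oriented path_loses_next] assms unfolding triple_def by blast

definition ends :: "nat \<Rightarrow> 'a set" where
  "ends i = {a i, c i}"

lemma ends_eq_part: "ends i = part i False"
  unfolding ends_def part_def by simp

lemma ends_subset_triple: "ends i \<subseteq> triple i"
  unfolding ends_def triple_def by auto

lemma dominating_part_step:
  assumes i: "i < k" and j: "j < k" and next_ne: "Suc j mod k \<noteq> i"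
    and dom: "part j mid \<times> ends i \<subseteq> E"
  shows "part (Suc j mod k) (mid \<noteq> middles_forward j) \<times> ends i \<subseteq> E"
proof safe
  fix w x assume w: "w \<in> part (Suc j mod k) (mid \<noteq> middles_forward j)" and x: "x \<in> ends i"
  obtain u where u: "u \<in> part j mid" using part_nonempty by blast
  have wu: "(w,u) \<in> E" using next_part_dominates[OF j] u w by blast
  have "(x,w) \<notin> E"
    using no_return_path[OF j _ _ wu] dom u w x part_subset_triple by blast
  then show "(w,x) \<in> E"
    using arc_between_triples[OF Suc_mod_less i next_ne] w x part_subset_triple ends_subset_triple
    by blast
qed

lemma dominated_part_step:
  assumes i: "i < k" and j: "j < k" and ne: "j \<noteq> i"
    and dom: "ends i \<times> part (Suc j mod k) mid \<subseteq> E"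
  shows "ends i \<times> part j (mid \<noteq> middles_forward j) \<subseteq> E"
proof safe
  fix x z assume x: "x \<in> ends i" and z: "z \<in> part j (mid \<noteq> middles_forward j)"
  obtain w where w: "w \<in> part (Suc j mod k) mid" using part_nonempty by blast
  have "((mid \<noteq> middles_forward j) \<noteq> middles_forward j) = mid" by blast
  then have wz: "(w,z) \<in> E" using next_part_dominates[OF j, of "mid \<noteq> middles_forward j"] w z by auto
  have "(z,x) \<notin> E"
    using no_return_path[OF j _ _ wz] dom w x z part_subset_triple by blast
  then show "(x,z) \<in> E"
    using arc_between_triples[OF j i ne] x z part_subset_triple ends_subset_triple by blast
qed

lemma dominating_part_exists:
  assumes i: "i < k"
  shows "0 < t \<Longrightarrow> t < k \<Longrightarrow> \<exists>mid. part ((i + t) mod k) mid \<times> ends i \<subseteq> E"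
proof (induction t)
  case 0
  then show ?case by simp
next
  case (Suc t)
  have next_idx: "Suc ((i + t) mod k) mod k = (i + Suc t) mod k" by (simp add: mod_Suc_eq)
  show ?case
  proof (cases "t = 0")
    case True
    then show ?thesis
      using next_part_dominates[OF i, of False] i by (auto simp: ends_eq_part)
  next
    case False
    then obtain mid where dom: "part ((i + t) mod k) mid \<times> ends i \<subseteq> E" using Suc by auto
    have "Suc ((i + t) mod k) mod k \<noteq> i" using add_mod_neq[OF i, of "Suc t"] Suc.prems next_idx by simp
    from dominating_part_step[OF i _ this dom] show ?thesis using next_idx i by auto
  qed
qed

lemma dominated_part_exists:
  assumes i: "i < k"
  shows "0 < t \<Longrightarrow> t < k \<Longrightarrow> \<exists>mid. ends i \<times> part ((i + t) mod k) mid \<subseteq> E"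
proof (induction "k - Suc t" arbitrary: t)
  case 0
  then have "Suc t = k" by simp
  have "Suc ((i + t) mod k) mod k = (i + Suc t) mod k" by (simp add: mod_Suc_eq)
  then have "Suc ((i + t) mod k) mod k = i" using \<open>Suc t = k\<close> i by simp
  then show ?case
    using next_part_dominates[of "(i + t) mod k" "middles_forward ((i + t) mod k)"] two_le_k
    by (auto simp: ends_eq_part)
next
  case (Suc n)
  then obtain mid where "ends i \<times> part ((i + Suc t) mod k) mid \<subseteq> E"
    using Suc.hyps(1)[of "Suc t"] by fastforce
  moreover have "Suc ((i + t) mod k) mod k = (i + Suc t) mod k" by (simp add: mod_Suc_eq)
  ultimately have "ends i \<times> part (Suc ((i + t) mod k) mod k) mid \<subseteq> E" by simp
  from dominated_part_step[OF i _ _ this] show ?case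
    using add_mod_neq[OF i] Suc.prems two_le_k by auto
qed

lemma joined_to_ends_alike:
  assumes i: "i < k" and j: "j < k" "j \<noteq> i" and v: "v \<in> triple j"
  shows "{v} \<times> ends i \<subseteq> E \<or> ends i \<times> {v} \<subseteq> E"
proof -
  obtain t where t: "0 < t" "t < k" "(i + t) mod k = j" using add_mod_surj[OF i j] .
  obtain mid mid' where dom: "part j mid \<times> ends i \<subseteq> E" and dom': "ends i \<times> part j mid' \<subseteq> E"
    using dominating_part_exists[OF i t(1,2)] dominated_part_exists[OF i t(1,2)] t(3) by blast
  have "mid \<noteq> mid'"
  proof
    assume "mid = mid'"
    obtain u where "u \<in> part j mid" using part_nonempty by blast
    then show False using dom dom' arc_asym unfolding ends_def by (auto simp: \<open>mid = mid'\<close>)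
  qed
  then have "v \<in> part j mid \<or> v \<in> part j mid'" using v triple_eq_parts by (cases mid) auto
  then show ?thesis using dom dom' by blast
qed

lemma ends_same_neighbours:
  assumes i: "i < k" and v: "v \<in> cycle_vertices k a b c" "v \<notin> ends i"
  shows "((a i, v) \<in> E \<longleftrightarrow> (c i, v) \<in> E) \<and> ((v, a i) \<in> E \<longleftrightarrow> (v, c i) \<in> E)"
proof -
  obtain j where j: "j < k" "v \<in> triple j" using v(1) unfolding cycle_vertices_def triple_def by blast
  show ?thesis
  proof (cases "j = i")
    case True
    then have "missing_edge V E (a i) v" "missing_edge V E v (c i)"
      using j v(2) missing_path_at[OF i] unfolding ends_def triple_def missing_path_def by auto
    then show ?thesis unfolding missing_edge_def by blast
  next
    case False
    show ?thesis using joined_to_ends_alike[OF i j(1) False j(2)] arc_asym unfolding ends_def by blast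
  qed
qed

end

theorem lemma4p8:
  fixes V :: "'a set" and E :: "('a \<times> 'a) set" and k :: nat and a b c :: "nat \<Rightarrow> 'a"
  assumes "tournament_missing_disjoint_P2 V E"
    and "double_cycle V E k a b c"
    and "i < k"
  shows "out_nbhd (cycle_vertices k a b c) E (a i) - {c i}
           = out_nbhd (cycle_vertices k a b c) E (c i) - {a i}
       \<and> in_nbhd (cycle_vertices k a b c) E (a i) - {c i}
           = in_nbhd (cycle_vertices k a b c) E (c i) - {a i}"
proof -
  interpret double_cycle_digraph V E k a b c
    using assms(1,2) unfolding tournament_missing_disjoint_P2_def by unfold_locales auto
  show ?thesis
    using ends_same_neighbours[OF assms(3)] no_loop
    unfolding out_nbhd_def in_nbhd_def ends_def by blast
qed

end
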